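(* Let $\varSigma$ be a surface diffeomorphic to $T^2$ or to the Klein bottle. If $\mathrm{D}$ is any flat connection on $\varSigma$ and $\xi$ is any $1$-form on $\varSigma$, then the connection $\nabla=\mathrm{D}-\xi\otimes\mathrm{Id}$ on $\varSigma$ (i.e.\ $\nabla_vw=\mathrm{D}_vw-\xi(v)w$) has skew-symmetric Ricci tensor. Conversely, every connection on $\varSigma$ with skew-symmetric Ricci tensor equals $\mathrm{D}-\xi\otimes\mathrm{Id}$ for some flat connection $\mathrm{D}$ on $\varSigma$ and some $1$-form $\xi$ on $\varSigma$.
   Context: Connections are in $T\varSigma$ and may have torsion. Curvature: $R(u,v)w=\nabla_v\nabla_u w-\nabla_u\nabla_v w+\nabla_{[u,v]}w$; Ricci tensor: $\rho(u,v)=\mathrm{tr}[w\mapsto R(u,w)v]$. *)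

theory Defs
  imports "HOL-Analysis.Analysis"
begin

text \<open>We model a compact surface as a quotient of the plane (real^2) by a group of
  affine deck transformations p |-> A p + c acting freely and properly discontinuously.
  Klein bottle: (x,y) |-> (x + m, (-1)^m y + n), m n integers; this group is generated by
  (x,y) |-> (x+1,-y) and (x,y) |-> (x,y+1).\<close>

type_synonym pt = "real^2"
type_synonym deck = "(real^2^2) \<times> (real^2)"

definition vec2 :: "real \<Rightarrow> real \<Rightarrow> real^2" where
  "vec2 a b = (\<chi> i. if i = 1 then a else b)"

definition diag2 :: "real \<Rightarrow> real \<Rightarrow> real^2^2" where
  "diag2 a b = (\<chi> i j. if i = j then (if i = 1 then a else b) else 0)"

definition torus_deck :: "deck set" where
  "torus_deck = {(mat 1, vec2 (of_int m) (of_int n)) | m n :: int. True}"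

definition klein_deck :: "deck set" where
  "klein_deck = {(diag2 1 ((-1) powi m), vec2 (of_int m) (of_int n)) | m n :: int. True}"

definition act :: "deck \<Rightarrow> pt \<Rightarrow> pt" where
  "act g p = fst g *v p + snd g"

fun Ck :: "nat \<Rightarrow> (real^2 \<Rightarrow> 'b::real_normed_vector) \<Rightarrow> bool" where
  "Ck 0 f = continuous_on UNIV f"
| "Ck (Suc k) f = ((\<forall>p. f differentiable (at p)) \<and>
                   (\<forall>v. Ck k (\<lambda>p. frechet_derivative f (at p) v)))"

definition smooth :: "(real^2 \<Rightarrow> 'b::real_normed_vector) \<Rightarrow> bool" where
  "smooth f = (\<forall>k. Ck k f)"

text \<open>A (possibly torsionful) affine connection on the tangent bundle is given by its
  Christoffel map Gam: (nabla_U W)(p) = DW(p) (U p) + Gam p (U p) (W p), with Gam p bilinear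
  and smooth in p. It descends to the quotient surface iff it is invariant under all deck
  transformations (for affine g(p) = A p + c: Gam (g p) (A u) (A w) = A (Gam p u w)).\<close>

definition is_connection :: "deck set \<Rightarrow> (pt \<Rightarrow> pt \<Rightarrow> pt \<Rightarrow> pt) \<Rightarrow> bool" where
  "is_connection G Gam \<longleftrightarrow>
     (\<forall>p. bilinear (Gam p)) \<and>
     (\<forall>u w. smooth (\<lambda>p. Gam p u w)) \<and>
     (\<forall>g\<in>G. \<forall>p u w. Gam (act g p) (fst g *v u) (fst g *v w) = fst g *v Gam p u w)"

definition is_one_form :: "deck set \<Rightarrow> (pt \<Rightarrow> pt \<Rightarrow> real) \<Rightarrow> bool" where
  "is_one_form G xi \<longleftrightarrow>
     (\<forall>p. linear (xi p)) \<and>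
     (\<forall>u. smooth (\<lambda>p. xi p u)) \<and>
     (\<forall>g\<in>G. \<forall>p u. xi (act g p) (fst g *v u) = xi p u)"

definition cov :: "(pt \<Rightarrow> pt \<Rightarrow> pt \<Rightarrow> pt) \<Rightarrow> (pt \<Rightarrow> pt) \<Rightarrow> (pt \<Rightarrow> pt) \<Rightarrow> pt \<Rightarrow> pt" where
  "cov Gam U W p = frechet_derivative W (at p) (U p) + Gam p (U p) (W p)"

definition lie_bracket :: "(pt \<Rightarrow> pt) \<Rightarrow> (pt \<Rightarrow> pt) \<Rightarrow> pt \<Rightarrow> pt" where
  "lie_bracket U V p = frechet_derivative V (at p) (U p) - frechet_derivative U (at p) (V p)"

text \<open>Curvature with the convention R(u,v)w = nabla_v nabla_u w - nabla_u nabla_v w + nabla_[u,v] w,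
  evaluated at p on tangent vectors u v w (extended to constant vector fields; R is tensorial).\<close>
definition curv :: "(pt \<Rightarrow> pt \<Rightarrow> pt \<Rightarrow> pt) \<Rightarrow> pt \<Rightarrow> pt \<Rightarrow> pt \<Rightarrow> pt \<Rightarrow> pt" where
  "curv Gam p u v w =
     (let U = (\<lambda>_. u); V = (\<lambda>_. v); W = (\<lambda>_. w) in
      cov Gam V (cov Gam U W) p - cov Gam U (cov Gam V W) p + cov Gam (lie_bracket U V) W p)"

definition ricci :: "(pt \<Rightarrow> pt \<Rightarrow> pt \<Rightarrow> pt) \<Rightarrow> pt \<Rightarrow> pt \<Rightarrow> pt \<Rightarrow> real" where
  "ricci Gam p u v = (\<Sum>i\<in>UNIV. curv Gam p u (axis i 1) v $ i)"

definition flat :: "(pt \<Rightarrow> pt \<Rightarrow> pt \<Rightarrow> pt) \<Rightarrow> bool" where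
  "flat Gam \<longleftrightarrow> (\<forall>p u v w. curv Gam p u v w = 0)"

definition ricci_skew :: "(pt \<Rightarrow> pt \<Rightarrow> pt \<Rightarrow> pt) \<Rightarrow> bool" where
  "ricci_skew Gam \<longleftrightarrow> (\<forall>p u v. ricci Gam p u v = - ricci Gam p v u)"

definition twist :: "(pt \<Rightarrow> pt \<Rightarrow> pt \<Rightarrow> pt) \<Rightarrow> (pt \<Rightarrow> pt \<Rightarrow> real) \<Rightarrow> pt \<Rightarrow> pt \<Rightarrow> pt \<Rightarrow> pt" where
  "twist D xi p u w = D p u w - xi p u *\<^sub>R w"

end

theory Submission
  imports Defs
begin

text \<open>On a surface the curvature of any connection is alternating in its first two arguments,
  so R(u,v) = det(u,v) K for a single endomorphism K at each point, and the Ricci tensor is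
  skew exactly when K is a multiple of the identity, K = (tr K / 2) Id.  Twisting,
  \<nabla> = D - \<xi> \<otimes> Id, adds d\<xi>(u,v) Id to the curvature.  Hence a twisted flat connection has
  curvature d\<xi> \<otimes> Id, whose Ricci tensor is the 2-form d\<xi>.  Conversely, the curvature of \<Gamma>
  has trace tr R(u,v) = -d(tr \<Gamma>)(u,v), where tr \<Gamma> is the 1-form u \<mapsto> tr \<Gamma>(u,\<cdot>); so when the Ricci
  tensor is skew, twisting by half of tr \<Gamma> cancels the curvature.  The trace form descends to
  the quotient because the deck transformations act by invertible linear maps.\<close>

section \<open>Differentiable and smooth maps on the plane\<close>

lemma frechet_derivative_add_at:
  assumes "f differentiable at p" "g differentiable at p"
  shows "frechet_derivative (\<lambda>q. f q + g q) (at p) v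
       = frechet_derivative f (at p) v + frechet_derivative g (at p) v"
proof -
  have "((\<lambda>q. f q + g q) has_derivative
          (\<lambda>v. frechet_derivative f (at p) v + frechet_derivative g (at p) v)) (at p)"
    using assms by (intro has_derivative_add) (simp_all add: frechet_derivative_works[symmetric])
  from frechet_derivative_at[OF this] show ?thesis by metis
qed

lemma frechet_derivative_bounded_linear_at:
  assumes "bounded_linear L" "f differentiable at p"
  shows "frechet_derivative (\<lambda>q. L (f q)) (at p) v = L (frechet_derivative f (at p) v)"
proof -
  have "((\<lambda>q. L (f q)) has_derivative (\<lambda>v. L (frechet_derivative f (at p) v))) (at p)"
    using bounded_linear.has_derivative[OF assms(1)] assms(2) frechet_derivative_works by blast
  from frechet_derivative_at[OF this] show ?thesis by metis
qed

lemma differentiable_bounded_linear_at: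
  assumes "bounded_linear L" "f differentiable at p"
  shows "(\<lambda>q. L (f q)) differentiable at p"
  using bounded_linear.has_derivative[OF assms(1) iffD1[OF frechet_derivative_works assms(2)]]
  by (rule differentiableI)

lemma linear_frechet_derivative_parameter:
  assumes "\<And>q. linear (F q)" and "\<And>u. (\<lambda>q. F q u) differentiable at p"
  shows "linear (\<lambda>u. frechet_derivative (\<lambda>q. F q u) (at p) v)"
proof (rule linearI)
  fix x y
  have "(\<lambda>q. F q (x + y)) = (\<lambda>q. F q x + F q y)"
    using assms(1) by (simp add: linear_add)
  then show "frechet_derivative (\<lambda>q. F q (x + y)) (at p) v
           = frechet_derivative (\<lambda>q. F q x) (at p) v + frechet_derivative (\<lambda>q. F q y) (at p) v"
    using frechet_derivative_add_at[OF assms(2) assms(2)] by simp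
next
  fix c x
  have "(\<lambda>q. F q (c *\<^sub>R x)) = (\<lambda>q. c *\<^sub>R F q x)"
    using assms(1) by (simp add: linear_scale)
  then show "frechet_derivative (\<lambda>q. F q (c *\<^sub>R x)) (at p) v
           = c *\<^sub>R frechet_derivative (\<lambda>q. F q x) (at p) v"
    using frechet_derivative_bounded_linear_at[OF bounded_linear_scaleR_right assms(2)] by simp
qed

lemma Ck_add: "Ck k f \<Longrightarrow> Ck k g \<Longrightarrow> Ck k (\<lambda>p. f p + g p)"
proof (induction k arbitrary: f g)
  case 0
  then show ?case by (simp add: continuous_on_add)
next
  case (Suc k)
  then have "(\<lambda>p. frechet_derivative (\<lambda>p. f p + g p) (at p) v)
           = (\<lambda>p. frechet_derivative f (at p) v + frechet_derivative g (at p) v)" for v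
    by (simp add: frechet_derivative_add_at)
  with Suc show ?case by (simp add: differentiable_add)
qed

lemma Ck_bounded_linear: "bounded_linear L \<Longrightarrow> Ck k f \<Longrightarrow> Ck k (\<lambda>p. L (f p))"
proof (induction k arbitrary: f)
  case 0
  then show ?case by (simp add: bounded_linear.continuous_on)
next
  case (Suc k)
  then have "(\<lambda>p. frechet_derivative (\<lambda>p. L (f p)) (at p) v)
           = (\<lambda>p. L (frechet_derivative f (at p) v))" for v
    by (simp add: frechet_derivative_bounded_linear_at)
  with Suc show ?case by (simp add: differentiable_bounded_linear_at)
qed

lemma smooth_add: "smooth f \<Longrightarrow> smooth g \<Longrightarrow> smooth (\<lambda>p. f p + g p)"
  by (simp add: smooth_def Ck_add)

lemma smooth_bounded_linear: "bounded_linear L \<Longrightarrow> smooth f \<Longrightarrow> smooth (\<lambda>p. L (f p))"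
  by (simp add: smooth_def Ck_bounded_linear)

lemma smooth_imp_differentiable: "smooth f \<Longrightarrow> f differentiable at p"
  unfolding smooth_def by (metis Ck.simps(2))

section \<open>Linear algebra in the plane\<close>

lemma linear_scale_real: "linear (f :: 'a::real_vector \<Rightarrow> real) \<Longrightarrow> linear (\<lambda>x. c * f x)"
  using linear_compose_scale_right[of f c] by (simp add: real_scaleR_def)

definition det2 :: "real^2 \<Rightarrow> real^2 \<Rightarrow> real" where
  "det2 u v = u$1 * v$2 - u$2 * v$1"

lemma vec2_basis_expansion: "(u::real^2) = u$1 *\<^sub>R axis 1 1 + u$2 *\<^sub>R axis 2 1"
  by (simp add: vec_eq_iff forall_2 axis_def)

lemma linear_plane_expansion:
  fixes f :: "real^2 \<Rightarrow> 'a::real_vector"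
  assumes "linear f"
  shows "f u = u$1 *\<^sub>R f (axis 1 1) + u$2 *\<^sub>R f (axis 2 1)"
  by (subst vec2_basis_expansion) (simp add: linear_add[OF assms] linear_scale[OF assms])

lemma alternating_bilinear_plane:
  fixes \<beta> :: "real^2 \<Rightarrow> real^2 \<Rightarrow> 'a::real_vector"
  assumes "\<And>v. linear (\<lambda>u. \<beta> u v)" and "\<And>u. linear (\<beta> u)"
    and "\<And>u v. \<beta> u v = - \<beta> v u"
  shows "\<beta> u v = det2 u v *\<^sub>R \<beta> (axis 1 1) (axis 2 1)"
proof -
  have diag: "\<beta> w w = 0" for w
  proof -
    have "\<beta> w w + \<beta> w w = 0"
      by (metis assms(3) add.right_inverse)
    then show ?thesis by (simp flip: scaleR_2)
  qed
  have "\<beta> u v = u$1 *\<^sub>R \<beta> (axis 1 1) v + u$2 *\<^sub>R \<beta> (axis 2 1) v"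
    by (rule linear_plane_expansion[OF assms(1)])
  also have "\<beta> (axis 1 1) v = v$2 *\<^sub>R \<beta> (axis 1 1) (axis 2 1)"
    using linear_plane_expansion[OF assms(2), of "axis 1 1" v] diag by simp
  also have "\<beta> (axis 2 1) v = - (v$1 *\<^sub>R \<beta> (axis 1 1) (axis 2 1))"
    using linear_plane_expansion[OF assms(2), of "axis 2 1" v] diag assms(3)[of "axis 2 1" "axis 1 1"]
    by simp
  finally show ?thesis by (simp add: det2_def algebra_simps)
qed

lemma trace_matrix_plane:
  "trace (matrix (f :: real^2 \<Rightarrow> real^2)) = f (axis 1 1) $ 1 + f (axis 2 1) $ 2"
  by (simp add: trace_def matrix_def sum_2)

lemma trace_matrix_intertwined:
  fixes f g :: "real^'n \<Rightarrow> real^'n"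
  assumes "linear f" "linear g" and "\<And>w. f (A *v w) = A *v g w" and "A ** B = mat 1"
  shows "trace (matrix f) = trace (matrix g)"
proof -
  have "matrix f ** A = matrix (f \<circ> (\<lambda>w. A *v w))"
    using assms(1) by (simp add: matrix_compose)
  also have "f \<circ> (\<lambda>w. A *v w) = (\<lambda>w. A *v w) \<circ> g"
    using assms(3) by auto
  also have "matrix \<dots> = A ** matrix g"
    using assms(2) by (simp add: matrix_compose)
  finally have intertwine: "matrix f ** A = A ** matrix g" .
  have "matrix f = matrix f ** A ** B"
    by (simp add: assms(4) flip: matrix_mul_assoc)
  also have "\<dots> = A ** (matrix g ** B)"
    by (simp only: intertwine matrix_mul_assoc)
  also have "trace \<dots> = trace (matrix g ** (B ** A))"
    using trace_mul_sym[of A "matrix g ** B"] by (simp only: matrix_mul_assoc)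
  also have "B ** A = mat 1"
    using assms(4) matrix_left_right_inverse by blast
  finally show ?thesis by simp
qed

section \<open>Curvature of connections on the plane\<close>

lemma curv_eq_christoffel:
  assumes "bilinear (Gam p)"
  shows "curv Gam p u v w =
           frechet_derivative (\<lambda>q. Gam q u w) (at p) v + Gam p v (Gam p u w)
         - (frechet_derivative (\<lambda>q. Gam q v w) (at p) u + Gam p u (Gam p v w))"
proof -
  have cov_const: "cov Gam (\<lambda>_. a) (\<lambda>_. w) = (\<lambda>q. Gam q a w)" for a
    by (simp add: fun_eq_iff cov_def)
  have "lie_bracket (\<lambda>_. u) (\<lambda>_. v) = (\<lambda>_. 0)"
    by (simp add: fun_eq_iff lie_bracket_def)
  moreover have "Gam p 0 w = 0"
    using assms by (rule bilinear_lzero)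
  ultimately show ?thesis
    by (simp add: curv_def cov_const cov_def)
qed

lemma curv_antisym: "bilinear (Gam p) \<Longrightarrow> curv Gam p u v w = - curv Gam p v u w"
  by (simp add: curv_eq_christoffel)

lemma linear_curv_fst:
  assumes "\<And>q. bilinear (Gam q)" and "\<And>u w. (\<lambda>q. Gam q u w) differentiable at p"
  shows "linear (\<lambda>u. curv Gam p u v w)"
proof -
  have lin_left: "linear (\<lambda>u. Gam q u x)" and lin_right: "linear (Gam q u)" for q u x
    using assms(1) by (simp_all add: bilinear_def)
  have "linear (\<lambda>u. frechet_derivative (\<lambda>q. Gam q u w) (at p) v)"
    using lin_left assms(2) by (rule linear_frechet_derivative_parameter)
  moreover have "linear (\<lambda>u. Gam p v (Gam p u w))"
    using linear_compose[OF lin_left lin_right] by (simp add: o_def)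
  moreover have "linear (\<lambda>u. frechet_derivative (\<lambda>q. Gam q v w) (at p) u)"
    using assms(2) by (rule linear_frechet_derivative)
  ultimately show ?thesis
    using lin_left
    by (simp add: curv_eq_christoffel[OF assms(1)] linear_compose_add linear_compose_sub)
qed

lemma linear_curv_snd:
  assumes "\<And>q. bilinear (Gam q)" and "\<And>u w. (\<lambda>q. Gam q u w) differentiable at p"
  shows "linear (\<lambda>v. curv Gam p u v w)"
proof -
  have "(\<lambda>v. curv Gam p u v w) = (\<lambda>v. - curv Gam p v u w)"
    by (rule ext) (rule curv_antisym[OF assms(1)])
  then show ?thesis
    using linear_compose_neg[OF linear_curv_fst[OF assms, of u w]] by simp
qed

lemma linear_curv_thd:
  assumes "\<And>q. bilinear (Gam q)" and "\<And>u w. (\<lambda>q. Gam q u w) differentiable at p"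
  shows "linear (curv Gam p u v)"
proof -
  have lin_right: "linear (Gam q u)" for q u
    using assms(1) by (simp add: bilinear_def)
  have "linear (\<lambda>w. frechet_derivative (\<lambda>q. Gam q a w) (at p) b)" for a b
    using lin_right assms(2) by (rule linear_frechet_derivative_parameter)
  moreover have "linear (\<lambda>w. Gam p a (Gam p b w))" for a b
    using linear_compose[OF lin_right lin_right] by (simp add: o_def)
  ultimately have "linear (\<lambda>w. frechet_derivative (\<lambda>q. Gam q u w) (at p) v + Gam p v (Gam p u w)
                   - (frechet_derivative (\<lambda>q. Gam q v w) (at p) u + Gam p u (Gam p v w)))"
    by (simp add: linear_compose_add linear_compose_sub)
  moreover have "curv Gam p u v = (\<lambda>w. frechet_derivative (\<lambda>q. Gam q u w) (at p) v + Gam p v (Gam p u w)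
                   - (frechet_derivative (\<lambda>q. Gam q v w) (at p) u + Gam p u (Gam p v w)))"
    by (rule ext) (rule curv_eq_christoffel[OF assms(1)])
  ultimately show ?thesis by simp
qed

lemma curv_plane:
  assumes "\<And>q. bilinear (Gam q)" and "\<And>u w. (\<lambda>q. Gam q u w) differentiable at p"
  shows "curv Gam p u v w = det2 u v *\<^sub>R curv Gam p (axis 1 1) (axis 2 1) w"
  using linear_curv_fst[OF assms] linear_curv_snd[OF assms] curv_antisym[OF assms(1)]
  by (rule alternating_bilinear_plane)

lemma ricci_plane:
  "ricci Gam p u v = curv Gam p u (axis 1 1) v $ 1 + curv Gam p u (axis 2 1) v $ 2"
  by (simp add: ricci_def sum_2)

lemma ricci_eq_of_curv_scalar:
  assumes "\<And>w. curv Gam p u w v = \<beta> w *\<^sub>R v" and "linear \<beta>"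
  shows "ricci Gam p u v = \<beta> v"
  using linear_plane_expansion[OF assms(2), of v] by (simp add: ricci_plane assms(1) axis_def)

lemma curv_eq_half_trace_scaleR:
  assumes "\<And>q. bilinear (Gam q)" and "\<And>u w. (\<lambda>q. Gam q u w) differentiable at p"
    and skew: "\<And>u v. ricci Gam p u v = - ricci Gam p v u"
  shows "curv Gam p (axis 1 1) (axis 2 1) w
       = (trace (matrix (curv Gam p (axis 1 1) (axis 2 1))) / 2) *\<^sub>R w"
proof -
  define K where "K = curv Gam p (axis 1 1) (axis 2 1)"
  have ricci_K: "ricci Gam p u v = u$1 * K v $ 2 - u$2 * K v $ 1" for u v
  proof -
    have "ricci Gam p u v = (det2 u (axis 1 1) *\<^sub>R K v) $ 1 + (det2 u (axis 2 1) *\<^sub>R K v) $ 2"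
      unfolding ricci_plane K_def
      by (simp only: curv_plane[OF assms(1,2), of u "axis 1 1" v] curv_plane[OF assms(1,2), of u "axis 2 1" v])
    then show ?thesis by (simp add: det2_def axis_def)
  qed
  have "K (axis 1 1) $ 2 = 0" "K (axis 2 1) $ 1 = 0" "K (axis 2 1) $ 2 = K (axis 1 1) $ 1"
    using skew[of "axis 1 1" "axis 1 1"] skew[of "axis 2 1" "axis 2 1"] skew[of "axis 1 1" "axis 2 1"]
    by (simp_all add: ricci_K axis_def)
  moreover have "K w = w$1 *\<^sub>R K (axis 1 1) + w$2 *\<^sub>R K (axis 2 1)"
    unfolding K_def by (rule linear_plane_expansion[OF linear_curv_thd[OF assms(1,2)]])
  ultimately show ?thesis
    by (simp add: K_def[symmetric] trace_matrix_plane vec_eq_iff forall_2)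
qed

definition christoffel_trace :: "(pt \<Rightarrow> pt \<Rightarrow> pt \<Rightarrow> pt) \<Rightarrow> pt \<Rightarrow> pt \<Rightarrow> real" where
  "christoffel_trace Gam q u = trace (matrix (Gam q u))"

lemma christoffel_trace_plane:
  "christoffel_trace Gam q u = Gam q u (axis 1 1) $ 1 + Gam q u (axis 2 1) $ 2"
  by (simp add: christoffel_trace_def trace_matrix_plane)

lemma linear_christoffel_trace: "bilinear (Gam q) \<Longrightarrow> linear (christoffel_trace Gam q)"
  by (rule linearI) (simp_all add: christoffel_trace_plane bilinear_ladd bilinear_lmul algebra_simps)

lemma smooth_christoffel_trace:
  "(\<And>w. smooth (\<lambda>q. Gam q u w)) \<Longrightarrow> smooth (\<lambda>q. christoffel_trace Gam q u)"
  unfolding christoffel_trace_plane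
  by (intro smooth_add smooth_bounded_linear[OF bounded_linear_vec_nth])

lemma differentiable_christoffel_trace:
  "(\<And>w. (\<lambda>q. Gam q u w) differentiable at p) \<Longrightarrow> (\<lambda>q. christoffel_trace Gam q u) differentiable at p"
  unfolding christoffel_trace_plane
  by (intro differentiable_add differentiable_bounded_linear_at[OF bounded_linear_vec_nth])

lemma frechet_derivative_christoffel_trace:
  assumes "\<And>w. (\<lambda>q. Gam q u w) differentiable at p"
  shows "frechet_derivative (\<lambda>q. christoffel_trace Gam q u) (at p) v
       = trace (matrix (\<lambda>w. frechet_derivative (\<lambda>q. Gam q u w) (at p) v))"
  unfolding christoffel_trace_plane trace_matrix_plane
  using assms
  by (simp add: frechet_derivative_add_at differentiable_bounded_linear_at[OF bounded_linear_vec_nth]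
      frechet_derivative_bounded_linear_at[OF bounded_linear_vec_nth])

lemma trace_curv:
  assumes "\<And>q. bilinear (Gam q)" and "\<And>u w. (\<lambda>q. Gam q u w) differentiable at p"
  shows "trace (matrix (curv Gam p u v))
       = frechet_derivative (\<lambda>q. christoffel_trace Gam q u) (at p) v
       - frechet_derivative (\<lambda>q. christoffel_trace Gam q v) (at p) u"
proof -
  have lin: "linear (Gam p a)" for a
    using assms(1) by (simp add: bilinear_def)
  \<comment> \<open>the quadratic part of the curvature is a commutator, hence traceless\<close>
  have commutator: "trace (matrix (Gam p v \<circ> Gam p u)) = trace (matrix (Gam p u \<circ> Gam p v))"
    by (simp add: matrix_compose lin trace_mul_sym[of "matrix (Gam p v)"])
  have "trace (matrix (curv Gam p u v))
      = trace (matrix (\<lambda>w. frechet_derivative (\<lambda>q. Gam q u w) (at p) v))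
      - trace (matrix (\<lambda>w. frechet_derivative (\<lambda>q. Gam q v w) (at p) u))
      + (trace (matrix (Gam p v \<circ> Gam p u)) - trace (matrix (Gam p u \<circ> Gam p v)))"
    by (simp add: trace_matrix_plane curv_eq_christoffel[OF assms(1)])
  then show ?thesis
    by (simp add: commutator frechet_derivative_christoffel_trace assms(2))
qed

lemma bilinear_twist:
  assumes "bilinear (D p)" and "linear (xi p)"
  shows "bilinear (twist D xi p)"
  unfolding bilinear_def twist_def
proof (intro allI conjI)
  fix u show "linear (\<lambda>w. D p u w - xi p u *\<^sub>R w)"
    using assms(1) by (intro linearI) (simp_all add: bilinear_radd bilinear_rmul algebra_simps)
next
  fix w show "linear (\<lambda>u. D p u w - xi p u *\<^sub>R w)"
    using assms by (intro linearI) (simp_all add: bilinear_ladd bilinear_lmul linear_add linear_scale algebra_simps)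
qed

lemma curv_twist:
  assumes "bilinear (D p)" and "linear (xi p)"
    and "\<And>u w. (\<lambda>q. D q u w) differentiable at p" and "\<And>u. (\<lambda>q. xi q u) differentiable at p"
  shows "curv (twist D xi) p u v w = curv D p u v w
       - (frechet_derivative (\<lambda>q. xi q u) (at p) v - frechet_derivative (\<lambda>q. xi q v) (at p) u) *\<^sub>R w"
proof -
  have "frechet_derivative (\<lambda>q. twist D xi q a w) (at p) b
      = frechet_derivative (\<lambda>q. D q a w) (at p) b - frechet_derivative (\<lambda>q. xi q a) (at p) b *\<^sub>R w"
    for a b
  proof -
    have "((\<lambda>q. D q a w - xi q a *\<^sub>R w) has_derivative
            (\<lambda>b. frechet_derivative (\<lambda>q. D q a w) (at p) b
               - frechet_derivative (\<lambda>q. xi q a) (at p) b *\<^sub>R w)) (at p)"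
      using assms(3,4)
      by (intro has_derivative_diff has_derivative_scaleR_left)
         (simp_all add: frechet_derivative_works[symmetric])
    from fun_cong[OF frechet_derivative_at[OF this], of b] show ?thesis
      by (simp add: twist_def)
  qed
  then show ?thesis
    using assms(1,2)
    by (simp add: curv_eq_christoffel bilinear_twist) (simp add: twist_def bilinear_rsub bilinear_rmul linear_diff linear_scale algebra_simps)
qed

section \<open>Connections and 1-forms on the quotient surface\<close>

lemma is_connectionD:
  assumes "is_connection G D"
  shows "bilinear (D q)" and "(\<lambda>q. D q u w) differentiable at p"
  using assms unfolding is_connection_def by (blast intro: smooth_imp_differentiable)+

lemma is_one_formD:
  assumes "is_one_form G xi"
  shows "linear (xi q)" and "(\<lambda>q. xi q u) differentiable at p"
  using assms unfolding is_one_form_def by (blast intro: smooth_imp_differentiable)+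

lemma is_one_form_scale: "is_one_form G xi \<Longrightarrow> is_one_form G (\<lambda>q u. c * xi q u)"
  unfolding is_one_form_def
  by (auto intro: linear_scale_real smooth_bounded_linear[OF bounded_linear_mult_right])

lemma is_connection_twist:
  assumes D: "is_connection G D" and xi: "is_one_form G xi"
  shows "is_connection G (twist D xi)"
  unfolding is_connection_def
proof (intro conjI ballI allI)
  fix p show "bilinear (twist D xi p)"
    using is_connectionD(1)[OF D] is_one_formD(1)[OF xi] by (rule bilinear_twist)
next
  fix u w
  have "smooth (\<lambda>p. D p u w)" and "smooth (\<lambda>p. xi p u)"
    using D xi unfolding is_connection_def is_one_form_def by blast+
  then have "smooth (\<lambda>p. D p u w + xi p u *\<^sub>R (- w))"
    by (rule smooth_add[OF _ smooth_bounded_linear[OF bounded_linear_scaleR_left]])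
  moreover have "(\<lambda>p. twist D xi p u w) = (\<lambda>p. D p u w + xi p u *\<^sub>R (- w))"
    by (simp add: fun_eq_iff twist_def)
  ultimately show "smooth (\<lambda>p. twist D xi p u w)"
    by (simp only:)
next
  fix g p u w
  assume "g \<in> G"
  then show "twist D xi (act g p) (fst g *v u) (fst g *v w) = fst g *v twist D xi p u w"
    using D xi unfolding is_connection_def is_one_form_def
    by (simp add: twist_def matrix_vector_mult_diff_distrib matrix_vector_mult_scaleR)
qed

lemma is_one_form_christoffel_trace:
  assumes C: "is_connection G Gam" and invertible: "\<And>g. g \<in> G \<Longrightarrow> \<exists>B. fst g ** B = mat 1"
  shows "is_one_form G (christoffel_trace Gam)"
  unfolding is_one_form_def
proof (intro conjI ballI allI)
  fix q show "linear (christoffel_trace Gam q)"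
    using is_connectionD(1)[OF C] by (rule linear_christoffel_trace)
next
  fix u show "smooth (\<lambda>q. christoffel_trace Gam q u)"
    using C unfolding is_connection_def by (simp add: smooth_christoffel_trace)
next
  fix g p u
  assume "g \<in> G"
  then obtain B where B: "fst g ** B = mat 1"
    using invertible by blast
  have lin: "linear (Gam q a)" for q a
    using is_connectionD(1)[OF C] by (simp add: bilinear_def)
  have equivariant: "Gam (act g p) (fst g *v u) (fst g *v w) = fst g *v Gam p u w" for w
    using C \<open>g \<in> G\<close> unfolding is_connection_def by blast
  show "christoffel_trace Gam (act g p) (fst g *v u) = christoffel_trace Gam p u"
    unfolding christoffel_trace_def by (intro trace_matrix_intertwined[OF lin lin _ B] equivariant)
qed

lemma deck_matrix_involution:
  assumes "G = torus_deck \<or> G = klein_deck" and "g \<in> G"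
  shows "fst g ** fst g = mat 1"
  using assms(1)
proof
  assume "G = torus_deck"
  with assms(2) show ?thesis
    by (auto simp: torus_deck_def)
next
  assume "G = klein_deck"
  with assms(2) obtain m :: int where m: "fst g = diag2 1 ((-1) powi m)"
    by (auto simp: klein_deck_def)
  have "(-1::real) powi m * (-1) powi m = 1"
    by (simp flip: power_int_mult_distrib)
  then show ?thesis
    by (simp add: m diag2_def matrix_matrix_mult_def mat_def vec_eq_iff forall_2 sum_2)
qed

lemma ricci_twist_flat:
  assumes D: "is_connection G D" "flat D" and xi: "is_one_form G xi"
  shows "ricci (twist D xi) p u v
       = frechet_derivative (\<lambda>q. xi q v) (at p) u - frechet_derivative (\<lambda>q. xi q u) (at p) v"
proof (rule ricci_eq_of_curv_scalar)
  fix w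
  show "curv (twist D xi) p u w v
      = (frechet_derivative (\<lambda>q. xi q w) (at p) u - frechet_derivative (\<lambda>q. xi q u) (at p) w) *\<^sub>R v"
    using D xi
    by (simp add: curv_twist is_connectionD is_one_formD flat_def algebra_simps)
next
  show "linear (\<lambda>w. frechet_derivative (\<lambda>q. xi q w) (at p) u - frechet_derivative (\<lambda>q. xi q u) (at p) w)"
    using xi
    by (intro linear_compose_sub linear_frechet_derivative_parameter linear_frechet_derivative)
       (simp_all add: is_one_formD)
qed

lemma flat_twist_half_christoffel_trace:
  assumes C: "is_connection G Gam" and skew: "ricci_skew Gam"
  shows "flat (twist Gam (\<lambda>q u. 1/2 * christoffel_trace Gam q u))"
  unfolding flat_def
proof (intro allI)
  fix p u v w
  define eta where "eta = (\<lambda>q u. 1/2 * christoffel_trace Gam q u)"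
  define K where "K = curv Gam p (axis 1 1) (axis 2 1)"
  have bil: "\<And>q. bilinear (Gam q)" and dGam: "\<And>a b. (\<lambda>q. Gam q a b) differentiable at p"
    using C by (rule is_connectionD)+
  have lin_eta: "linear (eta q)" for q
    unfolding eta_def by (intro linear_scale_real linear_christoffel_trace bil)
  have d_tr: "(\<lambda>q. christoffel_trace Gam q a) differentiable at p" for a p
    using C by (intro differentiable_christoffel_trace is_connectionD(2))
  have d_eta: "(\<lambda>q. eta q a) differentiable at p" for a p
    unfolding eta_def by (intro differentiable_bounded_linear_at[OF bounded_linear_mult_right] d_tr)
  have d_twist: "(\<lambda>q. twist Gam eta q a b) differentiable at p" for a b p
    using C d_eta by (simp add: twist_def is_connectionD)
  have deriv_eta: "frechet_derivative (\<lambda>q. eta q a) (at p) b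
                 = 1/2 * frechet_derivative (\<lambda>q. christoffel_trace Gam q a) (at p) b" for a b
    unfolding eta_def by (rule frechet_derivative_bounded_linear_at[OF bounded_linear_mult_right d_tr])
  have "K w = (trace (matrix K) / 2) *\<^sub>R w"
    unfolding K_def using skew unfolding ricci_skew_def
    by (intro curv_eq_half_trace_scaleR bil dGam) blast
  moreover have "trace (matrix K)
      = frechet_derivative (\<lambda>q. christoffel_trace Gam q (axis 1 1)) (at p) (axis 2 1)
      - frechet_derivative (\<lambda>q. christoffel_trace Gam q (axis 2 1)) (at p) (axis 1 1)"
    unfolding K_def using bil dGam by (rule trace_curv)
  moreover have "curv (twist Gam eta) p (axis 1 1) (axis 2 1) w
      = K w - (frechet_derivative (\<lambda>q. eta q (axis 1 1)) (at p) (axis 2 1)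
               - frechet_derivative (\<lambda>q. eta q (axis 2 1)) (at p) (axis 1 1)) *\<^sub>R w"
    unfolding K_def using bil lin_eta dGam d_eta by (rule curv_twist)
  ultimately have "curv (twist Gam eta) p (axis 1 1) (axis 2 1) w = 0"
    by (simp add: deriv_eta flip: scaleR_diff_left)
  moreover have "curv (twist Gam eta) p u v w
               = det2 u v *\<^sub>R curv (twist Gam eta) p (axis 1 1) (axis 2 1) w"
    using bilinear_twist[OF bil lin_eta] d_twist by (rule curv_plane)
  ultimately show "curv (twist Gam eta) p u v w = 0"
    by (simp add: eta_def)
qed

theorem theorem5p2:
  assumes "G = torus_deck \<or> G = klein_deck"
  shows "(\<forall>D xi. is_connection G D \<and> flat D \<and> is_one_form G xi
             \<longrightarrow> ricci_skew (twist D xi))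
       \<and> (\<forall>Gam. is_connection G Gam \<and> ricci_skew Gam
             \<longrightarrow> (\<exists>D xi. is_connection G D \<and> flat D \<and> is_one_form G xi
                        \<and> Gam = twist D xi))"
proof (intro conjI allI impI; elim conjE)
  fix D xi
  assume "is_connection G D" "flat D" "is_one_form G xi"
  then show "ricci_skew (twist D xi)"
    by (simp add: ricci_skew_def ricci_twist_flat)
next
  fix Gam
  assume C: "is_connection G Gam" and skew: "ricci_skew Gam"
  have tr: "is_one_form G (christoffel_trace Gam)"
    using C deck_matrix_involution[OF assms] by (blast intro: is_one_form_christoffel_trace)
  define D where "D = twist Gam (\<lambda>q u. 1/2 * christoffel_trace Gam q u)"
  have "is_connection G D"
    unfolding D_def using C is_one_form_scale[OF tr] by (rule is_connection_twist)
  moreover have "flat D"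
    unfolding D_def using C skew by (rule flat_twist_half_christoffel_trace)
  moreover have "is_one_form G (\<lambda>q u. - 1/2 * christoffel_trace Gam q u)"
    using is_one_form_scale[OF tr] .
  moreover have "Gam = twist D (\<lambda>q u. - 1/2 * christoffel_trace Gam q u)"
    by (simp add: D_def twist_def fun_eq_iff algebra_simps)
  ultimately show "\<exists>D xi. is_connection G D \<and> flat D \<and> is_one_form G xi \<and> Gam = twist D xi"
    by blast
qed

end
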